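(* Let $q\ge 2$, and let $\mathcal{C}\subseteq \Sigma^n$ be a code over an alphabet $\Sigma$ of size $q$ with $|\mathcal{C}|=q^k$ and locality $r$. Suppose $s:=n \bmod (r+1)\notin\{0,1\}$, and let $m:=\lceil n/(r+1)\rceil$. Suppose $\mathcal{C}$ has $m$ pairwise disjoint repair groups $A_1,\dots,A_m\subseteq\{1,\dots,n\}$ with $|A_i|=r+1$ for $i=1,\dots,m-1$ and $|A_m|=s$. If either $r\mid k$, or $r\nmid k$ and $k \bmod r\ge s$, then the minimum Hamming distance of $\mathcal{C}$ satisfies $$d_{\min}(\mathcal{C})\le n-k-\Big\lceil\frac{k}{r}\Big\rceil+1.$$
   Context: A code $\mathcal{C}$ of length $n$ has locality $r$ if for every coordinate $i\in\{1,\dots,n\}$ there is a set $I_i\subseteq\{1,\dots,n\}\setminus\{i\}$ with $|I_i|=r$ such that for every codeword $c=(c_1,\dots,c_n)\in\mathcal{C}$, $c_i$ is a function of $(c_l)_{l\in I_i}$; such a code with $|\mathcal{C}|=q^k$ is called an $(n,k,r)$ LRC code. A repair group is a subset $A\subseteq\{1,\dots,n\}$ such that for every $j\in A$ and every codeword $c$, the coordinate $c_j$ is a function of $(c_l)_{l\in A\setminus\{j\}}$. *)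

theory Defs
  imports Complex_Main
begin

text \<open>Codewords are lists of length n over the alphabet Alph; coordinates are 0..<n.\<close>

definition is_code :: "'a set \<Rightarrow> nat \<Rightarrow> 'a list set \<Rightarrow> bool" where
  "is_code Alph n C \<longleftrightarrow> (\<forall>c\<in>C. length c = n \<and> set c \<subseteq> Alph)"

definition determined_by :: "'a list set \<Rightarrow> nat set \<Rightarrow> nat \<Rightarrow> bool" where
  "determined_by C I i \<longleftrightarrow>
     (\<forall>c\<in>C. \<forall>c'\<in>C. (\<forall>l\<in>I. c ! l = c' ! l) \<longrightarrow> c ! i = c' ! i)"

definition has_locality :: "nat \<Rightarrow> 'a list set \<Rightarrow> nat \<Rightarrow> bool" where
  "has_locality n C r \<longleftrightarrow>
     (\<forall>i<n. \<exists>I. I \<subseteq> {0..<n} - {i} \<and> card I = r \<and> determined_by C I i)"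

definition repair_group :: "nat \<Rightarrow> 'a list set \<Rightarrow> nat set \<Rightarrow> bool" where
  "repair_group n C A \<longleftrightarrow>
     A \<subseteq> {0..<n} \<and> (\<forall>j\<in>A. determined_by C (A - {j}) j)"

definition hamming_dist :: "nat \<Rightarrow> 'a list \<Rightarrow> 'a list \<Rightarrow> nat" where
  "hamming_dist n c c' = card {i. i < n \<and> c ! i \<noteq> c' ! i}"

definition dmin :: "nat \<Rightarrow> 'a list set \<Rightarrow> nat" where
  "dmin n C = Min {hamming_dist n c c' | c c'. c \<in> C \<and> c' \<in> C \<and> c \<noteq> c'}"

end

theory Submission
  imports Defs "HOL-Library.FuncSet"
begin

text \<open>A coordinate of a repair group is determined by the rest of its group. So if a coordinate
  set \<open>T\<close> contains \<open>g\<close> disjoint repair groups, the projection of the code onto \<open>T\<close> takes at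
  most \<open>q ^ (|T| - g)\<close> values; when \<open>|T| - g < k\<close> it is not injective, and two distinct
  codewords agreeing on \<open>T\<close> are at distance at most \<open>n - |T|\<close>. Take for \<open>T\<close> the first
  \<open>j = \<lceil>k / r\<rceil> - 1\<close> groups of size \<open>r + 1\<close>, the short group of size \<open>s\<close>, and \<open>k - j r - s\<close>
  further coordinates of the next group; then \<open>|T| = k + j\<close> and \<open>|T| - g = k - 1\<close>. The
  hypothesis on \<open>k mod r\<close> is exactly what makes \<open>k - j r - s\<close> nonnegative.\<close>

lemma finite_code:
  assumes "finite Alph" "is_code Alph n C"
  shows "finite C"
proof (rule finite_subset)
  show "C \<subseteq> {xs. set xs \<subseteq> Alph \<and> length xs = n}"
    using assms(2) unfolding is_code_def by auto
  show "finite {xs. set xs \<subseteq> Alph \<and> length xs = n}"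
    using finite_lists_length_eq[OF assms(1)] .
qed

lemma determined_by_mono:
  assumes "determined_by C I i" "I \<subseteq> I'"
  shows "determined_by C I' i"
  using assms unfolding determined_by_def by blast

lemma card_image_le_if_factors:
  assumes "finite A" "\<And>x y. x \<in> A \<Longrightarrow> y \<in> A \<Longrightarrow> g x = g y \<Longrightarrow> f x = f y"
  shows "card (f ` A) \<le> card (g ` A)"
proof -
  have "f x = (f \<circ> inv_into A g) (g x)" if "x \<in> A" for x
    using assms(2)[of "inv_into A g (g x)" x] that by (simp add: inv_into_into f_inv_into_f)
  then have "f ` A = (f \<circ> inv_into A g) ` g ` A"
    unfolding image_image by (rule image_cong[OF refl])
  then show ?thesis
    using assms(1) by (simp add: card_image_le)
qed

lemma card_restrict_code_le:
  assumes "finite Alph" "card Alph = q" "is_code Alph n C"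
    and "T \<subseteq> {0..<n}" "J \<subseteq> T" "\<forall>j\<in>J. determined_by C (T - J) j"
  shows "card ((\<lambda>c. restrict ((!) c) T) ` C) \<le> q ^ (card T - card J)"
proof -
  have fin_T: "finite T"
    using assms(4) finite_subset by blast
  have "card ((\<lambda>c. restrict ((!) c) T) ` C) \<le> card ((\<lambda>c. restrict ((!) c) (T - J)) ` C)"
  proof (rule card_image_le_if_factors[OF finite_code[OF assms(1,3)]])
    fix c c' assume cc': "c \<in> C" "c' \<in> C"
      and eq: "restrict ((!) c) (T - J) = restrict ((!) c') (T - J)"
    have agree: "\<forall>l\<in>T - J. c ! l = c' ! l"
    proof
      fix l assume "l \<in> T - J"
      then show "c ! l = c' ! l"
        using fun_cong[OF eq, of l] by simp
    qed
    have "c ! l = c' ! l" if "l \<in> T" for l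
    proof (cases "l \<in> J")
      case True
      then show ?thesis
        using assms(6) agree cc' unfolding determined_by_def by blast
    next
      case False
      then show ?thesis
        using agree that by blast
    qed
    then show "restrict ((!) c) T = restrict ((!) c') T"
      by (intro restrict_ext)
  qed
  also have "\<dots> \<le> card (Pi\<^sub>E (T - J) (\<lambda>_. Alph))"
  proof (rule card_mono)
    show "finite (Pi\<^sub>E (T - J) (\<lambda>_. Alph))"
      using fin_T assms(1) by (simp add: finite_PiE)
    have "c ! l \<in> Alph" if "c \<in> C" "l \<in> T" for c l
      using assms(3,4) that unfolding is_code_def by (metis atLeastLessThan_iff nth_mem subsetD)
    then show "(\<lambda>c. restrict ((!) c) (T - J)) ` C \<subseteq> Pi\<^sub>E (T - J) (\<lambda>_. Alph)"
      unfolding image_subset_iff restrict_PiE_iff by blast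
  qed
  also have "\<dots> = q ^ (card T - card J)"
    using assms(2,5) fin_T by (simp add: card_PiE card_Diff_subset finite_subset)
  finally show ?thesis .
qed

lemma card_restrict_code_le_repair_groups:
  assumes "finite Alph" "card Alph = q" "is_code Alph n C" "T \<subseteq> {0..<n}"
    and "\<forall>i\<in>G. repair_group n C (B i) \<and> B i \<noteq> {} \<and> B i \<subseteq> T"
    and "\<forall>i\<in>G. \<forall>i'\<in>G. i \<noteq> i' \<longrightarrow> B i \<inter> B i' = {}"
  shows "card ((\<lambda>c. restrict ((!) c) T) ` C) \<le> q ^ (card T - card G)"
proof -
  have "\<forall>i\<in>G. \<exists>x. x \<in> B i"
    using assms(5) by blast
  then obtain j where j: "\<forall>i\<in>G. j i \<in> B i"
    by metis
  have j_unique: "i = i'" if "i \<in> G" "i' \<in> G" "j i \<in> B i'" for i i'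
    using assms(6) j that by blast
  have "inj_on j G"
    using j_unique j by (metis inj_onI)
  moreover have "determined_by C (T - j ` G) (j i)" if "i \<in> G" for i
  proof (rule determined_by_mono)
    show "determined_by C (B i - {j i}) (j i)"
      using assms(5) j that unfolding repair_group_def by blast
    show "B i - {j i} \<subseteq> T - j ` G"
      using assms(5) j_unique that by blast
  qed
  ultimately show ?thesis
    using card_restrict_code_le[OF assms(1-4), of "j ` G"] assms(5) j
    by (auto simp: card_image)
qed

lemma inj_on_restrict_code:
  assumes "is_code Alph n C"
  shows "inj_on (\<lambda>c. restrict ((!) c) {0..<n}) C"
proof (rule inj_onI)
  fix c c' assume "c \<in> C" "c' \<in> C" "restrict ((!) c) {0..<n} = restrict ((!) c') {0..<n}"
  then show "c = c'"
    using assms unfolding is_code_def by (metis atLeastLessThan_iff le0 nth_equalityI restrict_apply')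
qed

lemma hamming_dist_le: "hamming_dist n c c' \<le> n"
proof -
  have "card {i. i < n \<and> c ! i \<noteq> c' ! i} \<le> card {..<n}"
    by (rule card_mono) auto
  then show ?thesis
    unfolding hamming_dist_def by simp
qed

lemma dmin_le_hamming_dist:
  assumes "c \<in> C" "c' \<in> C" "c \<noteq> c'"
  shows "dmin n C \<le> hamming_dist n c c'"
proof -
  have "{hamming_dist n c c' | c c'. c \<in> C \<and> c' \<in> C \<and> c \<noteq> c'} \<subseteq> {..n}"
    using hamming_dist_le by blast
  then show ?thesis
    unfolding dmin_def using assms by (intro Min_le) (auto intro: finite_subset)
qed

lemma dmin_le_if_not_inj_restrict:
  assumes "T \<subseteq> {0..<n}" "\<not> inj_on (\<lambda>c. restrict ((!) c) T) C"
  shows "dmin n C \<le> n - card T"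
proof -
  obtain c c' where cc': "c \<in> C" "c' \<in> C" "c \<noteq> c'"
    and agree: "restrict ((!) c) T = restrict ((!) c') T"
    using assms(2) unfolding inj_on_def by blast
  have "c ! i = c' ! i" if "i \<in> T" for i
    using fun_cong[OF agree, of i] that by simp
  then have "{i. i < n \<and> c ! i \<noteq> c' ! i} \<subseteq> {0..<n} - T"
    by auto
  then have "hamming_dist n c c' \<le> card ({0..<n} - T)"
    unfolding hamming_dist_def by (intro card_mono) auto
  also have "\<dots> = n - card T"
    using assms(1) by (simp add: card_Diff_subset finite_subset)
  finally show ?thesis
    using dmin_le_hamming_dist[OF cc', of n] by linarith
qed

lemma dmin_le_repair_groups:
  assumes "finite Alph" "card Alph = q" "q \<ge> 2" "is_code Alph n C" "card C = q ^ k"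
    and "T \<subseteq> {0..<n}"
    and "\<forall>i\<in>G. repair_group n C (B i) \<and> B i \<noteq> {} \<and> B i \<subseteq> T"
    and "\<forall>i\<in>G. \<forall>i'\<in>G. i \<noteq> i' \<longrightarrow> B i \<inter> B i' = {}"
    and "card T - card G < k"
  shows "dmin n C \<le> n - card T"
proof (rule dmin_le_if_not_inj_restrict[OF assms(6)])
  have "card ((\<lambda>c. restrict ((!) c) T) ` C) \<le> q ^ (card T - card G)"
    using card_restrict_code_le_repair_groups[OF assms(1,2,4,6-8)] .
  also have "\<dots> < q ^ k"
    using assms(3,9) by (intro power_strict_increasing) simp_all
  finally show "\<not> inj_on (\<lambda>c. restrict ((!) c) T) C"
    using assms(5) card_image by fastforce
qed

lemma dim_le_length_minus_repair_groups:
  assumes "finite Alph" "card Alph = q" "q \<ge> 2" "is_code Alph n C" "card C = q ^ k"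
    and "\<forall>i\<in>G. repair_group n C (B i) \<and> B i \<noteq> {}"
    and "\<forall>i\<in>G. \<forall>i'\<in>G. i \<noteq> i' \<longrightarrow> B i \<inter> B i' = {}"
  shows "k \<le> n - card G"
proof -
  have "q ^ k = card ((\<lambda>c. restrict ((!) c) {0..<n}) ` C)"
    using assms(5) card_image[OF inj_on_restrict_code[OF assms(4)]] by simp
  also have "\<dots> \<le> q ^ (n - card G)"
    using card_restrict_code_le_repair_groups[OF assms(1,2,4), of "{0..<n}" G B] assms(6,7)
    unfolding repair_group_def by simp
  finally show ?thesis
    using assms(3) by (simp add: power_le_imp_le_exp)
qed

lemma ceiling_divide_eq_Suc:
  fixes a b j :: nat
  assumes "j * b < a" "a \<le> (j + 1) * b"
  shows "\<lceil>real a / real b\<rceil> = int j + 1"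
proof (rule ceiling_unique)
  have "b > 0"
    using assms by (cases b) auto
  moreover have "real (j * b) < real a" "real a \<le> real ((j + 1) * b)"
    using assms by (simp_all only: of_nat_less_iff of_nat_le_iff)
  ultimately show "real_of_int (int j + 1) - 1 < real a / real b"
    and "real a / real b \<le> real_of_int (int j + 1)"
    by (simp_all add: field_simps)
qed

lemma dim_split:
  fixes a k r s :: nat
  assumes "1 \<le> k" "s \<le> r" "k < a * r + s" "r dvd k \<or> s \<le> k mod r"
  obtains j e where "j < a" "j * r + s + e = k" "s + e \<le> r"
proof (cases "r dvd k")
  case True
  then obtain t where t: "k = t * r"
    by (metis dvd_def mult.commute)
  then have "t \<ge> 1"
    using assms(1) by (cases t) auto
  moreover have "t < a + 1"
  proof (rule ccontr)
    assume "\<not> t < a + 1"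
    then have "(a + 1) * r \<le> k"
      using t mult_le_mono1[of "a + 1" t r] by simp
    then show False
      using assms(2,3) by simp
  qed
  moreover have "(t - 1) * r + s + (r - s) = k"
    using t \<open>t \<ge> 1\<close> assms(2) by (cases t) auto
  ultimately show ?thesis
    using that[of "t - 1" "r - s"] assms(2) by simp
next
  case False
  have "r > 0"
    using assms(2,3) by (cases r) simp_all
  with False have "s \<le> k mod r" "k mod r < r"
    using assms(4) by simp_all
  moreover have "k div r < a"
  proof (rule ccontr)
    assume "\<not> k div r < a"
    then have "a * r \<le> k div r * r"
      by simp
    then show False
      using assms(3) \<open>s \<le> k mod r\<close> div_mult_mod_eq[of k r] by linarith
  qed
  ultimately show ?thesis
    using that[of "k div r" "k mod r - s"] div_mult_mod_eq[of k r] by simp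
qed

lemma dmin_le_repair_group_layout:
  fixes A :: "nat \<Rightarrow> nat set"
  assumes "finite Alph" "card Alph = q" "q \<ge> 2" "is_code Alph n C" "card C = q ^ k"
    and rg: "\<forall>i\<in>{1..m}. repair_group n C (A i)"
    and dj: "\<forall>i\<in>{1..m}. \<forall>i'\<in>{1..m}. i \<noteq> i' \<longrightarrow> A i \<inter> A i' = {}"
    and full: "\<forall>i\<in>{1..<m}. card (A i) = r + 1"
    and last: "card (A m) = s" "s \<ge> 1"
    and "j + 1 < m" "e \<le> r + 1" "j * r + s + e = k"
  shows "dmin n C \<le> n - (k + j)"
proof -
  define G where "G = insert m {1..j}"
  define U where "U = (\<Union>i\<in>G. A i)"
  have G_sub: "G \<subseteq> {1..m}" and "j + 1 \<notin> G" and card_G: "card G = j + 1"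
    using \<open>j + 1 < m\<close> by (auto simp: G_def)
  have A_sub: "A i \<subseteq> {0..<n}" if "i \<in> {1..m}" for i
    using rg that unfolding repair_group_def by blast
  then have fin_A: "finite (A i)" if "i \<in> {1..m}" for i
    using that finite_subset by blast
  have A_ne: "A i \<noteq> {}" if "i \<in> G" for i
  proof (cases "i = m")
    case False
    then have "card (A i) = r + 1"
      using full that \<open>j + 1 < m\<close> by (simp add: G_def)
    then show ?thesis
      by auto
  qed (use last in auto)
  have "e \<le> card (A (j + 1))"
    using full \<open>j + 1 < m\<close> \<open>e \<le> r + 1\<close> by simp
  then obtain E where E: "E \<subseteq> A (j + 1)" "card E = e"
    by (meson obtain_subset_with_card_n)
  have "card U = (\<Sum>i\<in>G. card (A i))"
    unfolding U_def
  proof (rule card_UN_disjoint)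
    show "finite G"
      by (simp add: G_def)
    show "\<forall>i\<in>G. finite (A i)"
      using G_sub fin_A by blast
    show "\<forall>i\<in>G. \<forall>i'\<in>G. i \<noteq> i' \<longrightarrow> A i \<inter> A i' = {}"
      using G_sub dj by blast
  qed
  also have "\<dots> = s + (\<Sum>i\<in>{1..j}. card (A i))"
    using last \<open>j + 1 < m\<close> by (simp add: G_def)
  also have "(\<Sum>i\<in>{1..j}. card (A i)) = j * (r + 1)"
    using full \<open>j + 1 < m\<close> by simp
  finally have card_U: "card U = s + j * (r + 1)" .
  have "A i \<inter> A (j + 1) = {}" if "i \<in> G" for i
  proof -
    have "i \<noteq> j + 1" "i \<in> {1..m}" "j + 1 \<in> {1..m}"
      using that G_sub \<open>j + 1 \<notin> G\<close> \<open>j + 1 < m\<close> by auto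
    then show ?thesis
      using dj by blast
  qed
  then have "U \<inter> E = {}"
    unfolding U_def using E(1) by blast
  moreover have "finite U"
    unfolding U_def using G_sub fin_A by (subst finite_UN) (auto simp: G_def)
  moreover have "finite E"
    using fin_A[of "j + 1"] E(1) \<open>j + 1 < m\<close> finite_subset by simp
  ultimately have card_T: "card (U \<union> E) = k + j"
    using card_U E(2) \<open>j * r + s + e = k\<close> by (simp add: card_Un_disjoint)
  have "dmin n C \<le> n - card (U \<union> E)"
  proof (rule dmin_le_repair_groups[OF assms(1-5)])
    have "U \<subseteq> {0..<n}"
      unfolding U_def using A_sub G_sub by blast
    moreover have "E \<subseteq> {0..<n}"
      using A_sub[of "j + 1"] E(1) \<open>j + 1 < m\<close> by simp
    ultimately show "U \<union> E \<subseteq> {0..<n}"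
      by blast
    show "\<forall>i\<in>G. repair_group n C (A i) \<and> A i \<noteq> {} \<and> A i \<subseteq> U \<union> E"
      using rg G_sub A_ne unfolding U_def by blast
    show "\<forall>i\<in>G. \<forall>i'\<in>G. i \<noteq> i' \<longrightarrow> A i \<inter> A i' = {}"
      using dj G_sub by blast
    show "card (U \<union> E) - card G < k"
      using card_T card_G \<open>j * r + s + e = k\<close> \<open>s \<ge> 1\<close> by simp
  qed
  then show ?thesis
    using card_T by simp
qed

theorem theorem2:
  fixes Alph :: "'a set" and C :: "'a list set" and q n k r :: nat
    and A :: "nat \<Rightarrow> nat set"
  assumes "finite Alph" and "card Alph = q" and "q \<ge> 2"
    and "is_code Alph n C" and "card C = q ^ k" and "k \<ge> 1"
    and "has_locality n C r"
    and "n mod (r + 1) \<notin> {0, 1}"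
    and "\<forall>i\<in>{1..nat \<lceil>real n / real (r + 1)\<rceil>}. repair_group n C (A i)"
    and "\<forall>i\<in>{1..nat \<lceil>real n / real (r + 1)\<rceil>}. \<forall>j\<in>{1..nat \<lceil>real n / real (r + 1)\<rceil>}.
           i \<noteq> j \<longrightarrow> A i \<inter> A j = {}"
    and "\<forall>i\<in>{1..<nat \<lceil>real n / real (r + 1)\<rceil>}. card (A i) = r + 1"
    and "card (A (nat \<lceil>real n / real (r + 1)\<rceil>)) = n mod (r + 1)"
    and "r dvd k \<or> (\<not> r dvd k \<and> k mod r \<ge> n mod (r + 1))"
  shows "int (dmin n C) \<le> int n - int k - \<lceil>real k / real r\<rceil> + 1"
proof -
  define s where "s = n mod (r + 1)"
  define a where "a = n div (r + 1)"
  have n_eq: "n = a * (r + 1) + s"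
    unfolding a_def s_def by (rule div_mult_mod_eq[symmetric])
  have "s \<ge> 2" "s \<le> r"
    using assms(8) by (auto simp: s_def less_Suc_eq_le[symmetric])
  have "\<lceil>real n / real (r + 1)\<rceil> = int a + 1"
    using n_eq \<open>s \<ge> 2\<close> \<open>s \<le> r\<close> by (intro ceiling_divide_eq_Suc) simp_all
  then have m_eq: "nat \<lceil>real n / real (r + 1)\<rceil> = a + 1"
    by simp
  note rg = assms(9)[unfolded m_eq] and dj = assms(10)[unfolded m_eq]
    and full = assms(11)[unfolded m_eq] and last = assms(12)[unfolded m_eq, folded s_def]
  have "A i \<noteq> {}" if "i \<in> {1..a + 1}" for i
  proof (cases "i = a + 1")
    case False
    then have "card (A i) = r + 1"
      using that full by simp
    then show ?thesis
      by auto
  qed (use last \<open>s \<ge> 2\<close> in auto)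
  then have "k \<le> n - (a + 1)"
    using dim_le_length_minus_repair_groups[OF assms(1-5) _ dj] rg by simp
  then have "k < a * r + s"
    using n_eq \<open>s \<ge> 2\<close> by simp
  then obtain j e where j: "j < a" "j * r + s + e = k" "s + e \<le> r"
    using dim_split[OF assms(6) \<open>s \<le> r\<close>] assms(13) unfolding s_def by blast
  have "dmin n C \<le> n - (k + j)"
    using j \<open>s \<ge> 2\<close>
    by (intro dmin_le_repair_group_layout[OF assms(1-5) rg dj full last]) simp_all
  moreover have "\<lceil>real k / real r\<rceil> = int j + 1"
    using j \<open>s \<ge> 2\<close> by (intro ceiling_divide_eq_Suc) simp_all
  moreover have "k + j \<le> n"
    using \<open>k < a * r + s\<close> n_eq j(1) by simp
  ultimately show ?thesis
    by linarith
qed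

end
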